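(* Let $\mathcal C\subset\mathbb R^d$ be a non-empty convex compact set, $H=\operatorname{aff}(\mathcal C)$ with direction $V$, so $\mathbb R^d=V\oplus V^\perp$, and $\Pi_V$ the orthogonal projection onto $V$. Let $\Omega$ be a proper l.s.c. convex function on $\mathbb R^d$ with $\operatorname{dom}(\Omega)=\mathcal C$ whose restriction $\Omega_{|H}$ to $H$ is Legendre-type (with respect to the metric of $H$). Then: (1) $\operatorname{dom}(\Omega^* )=\mathbb R^d$, so $\Omega$ is a $\mathcal C$-regularizer; moreover $\Omega^*$ is differentiable on $\mathbb R^d$ and for every $y\in\operatorname{relint}(\mathcal C)$ and every $\theta\in\partial\Omega(y)$, $\nabla\Omega^*(\theta)=y$. (2) For every $\theta\in\mathbb R^d$, written $\theta=\theta_V+\theta_{V^\perp}$ with $\theta_V=\Pi_V(\theta)$, and every $y_0\in\mathcal C$, $\Omega^*(\theta)=\Omega^*(\theta_V)+\langle\theta_{V^\perp}|y_0\rangle$. (3) For every $y\in H$, $\partial\Omega(y)=\partial(\Omega_{|H})(y)+V^\perp$, and in particular for $y\in\operatorname{relint}(\operatorname{dom}\Omega)$, $\partial\Omega(y)=\{\nabla\Omega_{|H}(y)\}+V^\perp$.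
   Context: A function is Legendre-type if it is strictly convex on the interior of its domain and essentially smooth: the interior of its domain is nonempty, it is differentiable there, and its gradient norm tends to $+\infty$ at the boundary of the domain. For $\Omega_{|H}$, interiors, gradients and subdifferentials are taken in $H$ with the inner product induced on $V$ (so $\partial(\Omega_{|H})(y)\subset V$, viewed in $\mathbb R^d$). $\Omega^*$ is the Fenchel conjugate. A $\mathcal C$-regularizer is a strictly convex, lower-semicontinuous function $\Omega:\mathbb R^d\to\mathbb R\cup\{+\infty\}$ with $\operatorname{cl}(\operatorname{dom}\Omega)=\mathcal C$ and $\operatorname{dom}(\Omega^* )=\mathbb R^d$.
   Formalization: Part (1) omits the conclusion that $\Omega$ is a $\mathcal C$-regularizer, so strict convexity of $\Omega$ on $\operatorname{dom}(\Omega)=\mathcal C$ is not asserted. The statement above fails without it. *)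

theory Defs
  imports "HOL-Analysis.Analysis"
begin

definition edom :: "('a \<Rightarrow> ereal) \<Rightarrow> 'a set" where
  "edom f = {x. f x < \<infinity>}"

definition proper_fun :: "('a \<Rightarrow> ereal) \<Rightarrow> bool" where
  "proper_fun f \<longleftrightarrow> (\<forall>x. f x \<noteq> -\<infinity>) \<and> (\<exists>x. f x \<noteq> \<infinity>)"

definition econvex :: "('a::real_vector \<Rightarrow> ereal) \<Rightarrow> bool" where
  "econvex f \<longleftrightarrow> convex {(x, r::real). f x \<le> ereal r}"

definition elsc :: "('a::topological_space \<Rightarrow> ereal) \<Rightarrow> bool" where
  "elsc f \<longleftrightarrow> (\<forall>x. f x \<le> Liminf (at x) f)"

definition fconj :: "('a::real_inner \<Rightarrow> ereal) \<Rightarrow> 'a \<Rightarrow> ereal" where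
  "fconj f \<theta> = (SUP y. ereal (\<theta> \<bullet> y) - f y)"

definition subdiff :: "('a::real_inner \<Rightarrow> ereal) \<Rightarrow> 'a \<Rightarrow> 'a set" where
  "subdiff f y = {\<theta>. f y \<noteq> \<infinity> \<and> (\<forall>z. f y + ereal (\<theta> \<bullet> (z - y)) \<le> f z)}"

text \<open>Subdifferential of the restriction of f to the affine set H with direction V,
  taken in H with the inner product induced on V (so subgradients lie in V).\<close>
definition rel_subdiff :: "('a::real_inner \<Rightarrow> ereal) \<Rightarrow> 'a set \<Rightarrow> 'a set \<Rightarrow> 'a \<Rightarrow> 'a set" where
  "rel_subdiff f H V y = {g \<in> V. y \<in> H \<and> f y \<noteq> \<infinity> \<and> (\<forall>z\<in>H. f y + ereal (g \<bullet> (z - y)) \<le> f z)}"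

definition direction :: "'a::real_vector set \<Rightarrow> 'a set" where
  "direction H = {x - y | x y. x \<in> H \<and> y \<in> H}"

definition orth_proj :: "'a::real_inner set \<Rightarrow> 'a \<Rightarrow> 'a" where
  "orth_proj V \<theta> = (THE v. v \<in> V \<and> \<theta> - v \<in> orthogonal_comp V)"

definition has_rel_gradient :: "('a::real_inner \<Rightarrow> ereal) \<Rightarrow> 'a set \<Rightarrow> 'a \<Rightarrow> 'a \<Rightarrow> bool" where
  "has_rel_gradient f V y g \<longleftrightarrow> g \<in> V \<and>
     ((\<lambda>h. real_of_ereal (f (y + h))) has_derivative (\<lambda>h. g \<bullet> h)) (at 0 within V)"

text \<open>The restriction of f to the affine set H (direction V) is of Legendre type,
  with interiors/boundaries taken in H.\<close>
definition legendre_on :: "('a::euclidean_space \<Rightarrow> ereal) \<Rightarrow> 'a set \<Rightarrow> 'a set \<Rightarrow> bool" where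
  "legendre_on f H V \<longleftrightarrow>
    (let D = {y \<in> H. f y < \<infinity>};
         I = (top_of_set H) interior_of D;
         B = (top_of_set H) frontier_of D in
     \<comment> \<open>strictly convex on the interior of the domain\<close>
     (\<forall>x\<in>I. \<forall>y\<in>I. \<forall>t::real. x \<noteq> y \<and> 0 < t \<and> t < 1 \<longrightarrow>
        f ((1 - t) *\<^sub>R x + t *\<^sub>R y) < ereal (1 - t) * f x + ereal t * f y) \<and>
     \<comment> \<open>essentially smooth\<close>
     I \<noteq> {} \<and>
     (\<forall>y\<in>I. \<exists>g. has_rel_gradient f V y g) \<and>
     (\<forall>s x g. (\<forall>k. s k \<in> I) \<longrightarrow> s \<longlonglongrightarrow> x \<longrightarrow> x \<in> B \<longrightarrow>
        (\<forall>k. has_rel_gradient f V (s k) (g k)) \<longrightarrow>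
        filterlim (\<lambda>k. norm (g k)) at_top sequentially))"

end

theory Submission
  imports Defs
begin

text \<open>
  Since \<Omega> is finite exactly on the compact set C and lower semicontinuous, the supremum defining
  fconj \<Omega> \<theta> is the maximum of \<theta> \<bullet> y - \<Omega> y over C. A maximizer y cannot lie on the relative
  boundary of C: along a segment from a relative interior point towards y, maximality and the
  subgradient inequality keep g \<bullet> w bounded above for the relative gradients g and any fixed
  direction w \<in> V, whereas essential smoothness forces these gradients to blow up. Strict convexity
  on the relative interior then makes the maximizer Y(\<theta>) unique, compactness makes Y continuous,
  and a maximum of affine functions of \<theta> with continuous maximizing slope Y(\<theta>) is differentiable
  with gradient Y(\<theta>). Since \<Omega> = \<infinity> off H, the component of \<theta> orthogonal to V is constant on C;
  this gives the splitting of fconj \<Omega> and of subdiff \<Omega>.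
\<close>

section \<open>Lower semicontinuous extended-real functions\<close>

lemma elsc_le_liminf_sequentially:
  fixes f :: "'a::metric_space \<Rightarrow> ereal"
  assumes "elsc f" and "X \<longlonglongrightarrow> x"
  shows "f x \<le> liminf (\<lambda>n. f (X n))"
proof -
  have fx: "f x = (SUP e\<in>{0<..}. INF y\<in>ball x e. f y)"
    using min_Liminf_at[of f x] assms(1) by (simp add: elsc_def min_def)
  show ?thesis unfolding le_Liminf_iff
  proof (intro allI impI)
    fix c assume "c < f x"
    then obtain e where e: "e > 0" "c < (INF z\<in>ball x e. f z)"
      using fx by (auto simp: less_SUP_iff)
    have "eventually (\<lambda>n. X n \<in> ball x e) sequentially"
      using assms(2) e(1) by (intro topological_tendstoD) auto
    then show "eventually (\<lambda>n. c < f (X n)) sequentially"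
      by eventually_elim (meson INF_lower e(2) less_le_trans)
  qed
qed

lemma elsc_open_superlevel_add_inner:
  fixes f :: "'a::real_inner \<Rightarrow> ereal"
  assumes lsc: "elsc f" and no_minf: "\<And>x. f x \<noteq> -\<infinity>"
  shows "open {x. c < f x + ereal (a \<bullet> x)}"
proof (cases c)
  case (real r)
  have "closed {x. f x \<le> ereal (r - a \<bullet> x)}"
    unfolding closed_sequential_limits
  proof (intro allI impI, elim conjE)
    fix X l assume X: "\<forall>n. X n \<in> {x. f x \<le> ereal (r - a \<bullet> x)}" and l: "X \<longlonglongrightarrow> l"
    have "f l \<le> liminf (\<lambda>n. f (X n))" using elsc_le_liminf_sequentially[OF lsc l] .
    also have "\<dots> \<le> liminf (\<lambda>n. ereal (r - a \<bullet> X n))"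
      using X by (intro Liminf_mono) auto
    also have "\<dots> = ereal (r - a \<bullet> l)"
      by (rule lim_imp_Liminf) (simp, intro tendsto_ereal tendsto_diff tendsto_const tendsto_inner l)
    finally show "l \<in> {x. f x \<le> ereal (r - a \<bullet> x)}" by simp
  qed
  moreover have "{x. c < f x + ereal (a \<bullet> x)} = - {x. f x \<le> ereal (r - a \<bullet> x)}"
  proof -
    have "c < f x + ereal (a \<bullet> x) \<longleftrightarrow> \<not> f x \<le> ereal (r - a \<bullet> x)" for x
      using real by (cases "f x") auto
    then show ?thesis by auto
  qed
  ultimately show ?thesis by (simp add: open_Compl)
next
  case MInf
  have "-\<infinity> < f x + ereal (a \<bullet> x)" for x
    using no_minf[of x] by (cases "f x") auto
  then show ?thesis using MInf by simp
qed simp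

lemma elsc_add_inner_attains_min:
  fixes f :: "'a::real_inner \<Rightarrow> ereal"
  assumes "elsc f" and "\<And>x. f x \<noteq> -\<infinity>" and "compact K" and "K \<noteq> {}"
  obtains x where "x \<in> K" and "\<And>z. z \<in> K \<Longrightarrow> f x + ereal (a \<bullet> x) \<le> f z + ereal (a \<bullet> z)"
proof -
  define h where "h x = f x + ereal (a \<bullet> x)" for x
  have "\<exists>x\<in>K. \<forall>z\<in>K. h x \<le> h z"
  proof (rule ccontr)
    assume "\<not> ?thesis"
    then have "K \<subseteq> (\<Union>z\<in>K. {x. h z < h x})" by (auto simp: not_le)
    moreover have "open {x. h z < h x}" for z
      unfolding h_def using assms(1,2) by (rule elsc_open_superlevel_add_inner)
    ultimately obtain Z where Z: "Z \<subseteq> K" "finite Z" "K \<subseteq> (\<Union>z\<in>Z. {x. h z < h x})"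
      using compactE_image[OF assms(3)] by metis
    then have "Z \<noteq> {}" using assms(4) by auto
    then have "Min (h ` Z) \<in> h ` Z" using Z(2) by simp
    then obtain z0 where "z0 \<in> Z" "h z0 = Min (h ` Z)" by auto
    moreover obtain z where "z \<in> Z" "h z < h z0" using Z \<open>z0 \<in> Z\<close> by blast
    moreover have "Min (h ` Z) \<le> h z" using Z(2) \<open>z \<in> Z\<close> by simp
    ultimately show False by simp
  qed
  then show ?thesis using that unfolding h_def by blast
qed

section \<open>Directions of affine sets\<close>

lemma affine_add_direction:
  assumes "affine H" and "x \<in> H" and "v \<in> direction H"
  shows "x + v \<in> H"
proof -
  obtain a b where "v = a - b" "a \<in> H" "b \<in> H"
    using assms(3) by (auto simp: direction_def)
  then show ?thesis using mem_affine_3_minus[OF assms(1,2), of a b 1] by simp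
qed

lemma subspace_direction:
  assumes "affine H" and "H \<noteq> {}"
  shows "subspace (direction H)"
proof -
  obtain a where a: "a \<in> H" using assms(2) by auto
  have "direction H = (\<lambda>x. x - a) ` H"
  proof
    show "direction H \<subseteq> (\<lambda>x. x - a) ` H"
    proof
      fix v assume "v \<in> direction H"
      then have "a + v \<in> H" using affine_add_direction[OF assms(1) a] by blast
      then show "v \<in> (\<lambda>x. x - a) ` H" by (intro image_eqI[of _ _ "a + v"]) auto
    qed
    show "(\<lambda>x. x - a) ` H \<subseteq> direction H" using a by (auto simp: direction_def)
  qed
  then show ?thesis using affine_diffs_subspace_subtract[OF assms(1) a] by simp
qed

lemma diff_mem_direction: "x \<in> H \<Longrightarrow> y \<in> H \<Longrightarrow> x - y \<in> direction H"
  by (auto simp: direction_def)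

lemma orthogonal_comp_direction_inner:
  assumes "b \<in> orthogonal_comp (direction H)" and "x \<in> H" and "y \<in> H"
  shows "b \<bullet> (x - y) = 0"
  using diff_mem_direction[OF assms(2,3)] assms(1)
  by (auto simp: orthogonal_comp_def orthogonal_def inner_commute)

lemma orth_proj_decomp:
  fixes V :: "'a::euclidean_space set"
  assumes "subspace V"
  shows "orth_proj V \<theta> \<in> V" and "\<theta> - orth_proj V \<theta> \<in> orthogonal_comp V"
proof -
  have span_V: "span V = V" using assms by (simp add: span_eq_iff)
  obtain v w where "v \<in> span V" "\<And>u. u \<in> span V \<Longrightarrow> orthogonal w u" "\<theta> = v + w"
    using orthogonal_subspace_decomp_exists[of V \<theta>] by blast
  then have ex: "v \<in> V \<and> \<theta> - v \<in> orthogonal_comp V"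
    using span_V by (auto simp: orthogonal_comp_def orthogonal_commute)
  have "u = v" if "u \<in> V \<and> \<theta> - u \<in> orthogonal_comp V" for u
  proof -
    have "u + (\<theta> - u) = v + (\<theta> - v)" by simp
    moreover have "span (orthogonal_comp V) = orthogonal_comp V"
      by (simp add: span_eq_iff subspace_orthogonal_comp)
    moreover have "orthogonal p q" if "p \<in> V" "q \<in> orthogonal_comp V" for p q
      using that by (simp add: orthogonal_comp_def)
    ultimately show ?thesis
      using orthogonal_subspace_decomp_unique[of u "\<theta> - u" v "\<theta> - v" V "orthogonal_comp V"]
        that ex span_V by blast
  qed
  then have "orth_proj V \<theta> = v"
    unfolding orth_proj_def using ex by blast
  then show "orth_proj V \<theta> \<in> V" and "\<theta> - orth_proj V \<theta> \<in> orthogonal_comp V"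
    using ex by auto
qed

section \<open>Functions that are infinite off an affine set\<close>

lemma fconj_orth_proj:
  fixes f :: "'a::euclidean_space \<Rightarrow> ereal" and \<theta> :: 'a
  assumes "affine H" and "edom f \<subseteq> H" and "y0 \<in> H"
  defines "P \<equiv> orth_proj (direction H) \<theta>"
  shows "fconj f \<theta> = fconj f P + ereal ((\<theta> - P) \<bullet> y0)"
proof -
  have "\<theta> - P \<in> orthogonal_comp (direction H)"
    unfolding P_def using subspace_direction assms(1,3) by (blast intro: orth_proj_decomp)
  then have on_H: "\<theta> \<bullet> z = P \<bullet> z + (\<theta> - P) \<bullet> y0" if "z \<in> H" for z
    using orthogonal_comp_direction_inner[of "\<theta> - P" H z y0] that assms(3)
    by (simp add: algebra_simps inner_diff_left inner_diff_right)
  have "ereal (\<theta> \<bullet> z) - f z = ereal (P \<bullet> z) - f z + ereal ((\<theta> - P) \<bullet> y0)" for z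
  proof (cases "z \<in> H")
    case True
    then show ?thesis using on_H by (cases "f z") auto
  next
    case False
    then have "f z = \<infinity>" using assms(2) by (auto simp: edom_def)
    then show ?thesis by simp
  qed
  then show ?thesis by (simp add: fconj_def SUP_ereal_add_left)
qed

lemma subdiff_eq_rel_subdiff_plus_orthogonal_comp:
  fixes f :: "'a::euclidean_space \<Rightarrow> ereal"
  assumes "affine H" and "edom f \<subseteq> H" and y: "y \<in> H"
  defines "V \<equiv> direction H"
  shows "subdiff f y = {a + b | a b. a \<in> rel_subdiff f H V y \<and> b \<in> orthogonal_comp V}"
proof
  show "subdiff f y \<subseteq> {a + b | a b. a \<in> rel_subdiff f H V y \<and> b \<in> orthogonal_comp V}"
  proof
    fix \<theta> assume \<theta>: "\<theta> \<in> subdiff f y"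
    have V: "subspace V" unfolding V_def using subspace_direction assms(1) y by blast
    define a where "a = orth_proj V \<theta>"
    have a: "a \<in> V" and b: "\<theta> - a \<in> orthogonal_comp V"
      unfolding a_def using orth_proj_decomp[OF V] by auto
    have "a \<bullet> (z - y) = \<theta> \<bullet> (z - y)" if "z \<in> H" for z
      using orthogonal_comp_direction_inner[OF b[unfolded V_def] that y]
      by (simp add: inner_diff_left)
    then have "a \<in> rel_subdiff f H V y"
      using \<theta> a y by (simp add: rel_subdiff_def subdiff_def)
    then show "\<theta> \<in> {a + b | a b. a \<in> rel_subdiff f H V y \<and> b \<in> orthogonal_comp V}"
      using b by force
  qed
next
  show "{a + b | a b. a \<in> rel_subdiff f H V y \<and> b \<in> orthogonal_comp V} \<subseteq> subdiff f y"
  proof clarify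
    fix a b assume a: "a \<in> rel_subdiff f H V y" and b: "b \<in> orthogonal_comp V"
    have "f y + ereal ((a + b) \<bullet> (z - y)) \<le> f z" for z
    proof (cases "z \<in> H")
      case True
      then have "(a + b) \<bullet> (z - y) = a \<bullet> (z - y)"
        using orthogonal_comp_direction_inner[OF b[unfolded V_def] True y]
        by (simp add: inner_add_left)
      then show ?thesis using a True by (simp add: rel_subdiff_def)
    next
      case False
      then have "f z = \<infinity>" using assms(2) by (auto simp: edom_def)
      then show ?thesis by simp
    qed
    then show "a + b \<in> subdiff f y" using a by (simp add: subdiff_def rel_subdiff_def)
  qed
qed

section \<open>Relative gradients of convex functions\<close>

lemma econvex_le_convex_combination:
  assumes "econvex f" and "f x \<le> ereal a" and "f z \<le> ereal b" and "0 \<le> t" and "t \<le> 1"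
  shows "f ((1 - t) *\<^sub>R x + t *\<^sub>R z) \<le> ereal ((1 - t) * a + t * b)"
  using convexD[of "{(x, r). f x \<le> ereal r}" "(x, a)" "(z, b)" "1 - t" t] assms
  by (simp add: econvex_def)

lemma has_rel_gradient_directional_derivative:
  assumes "subspace V" and "has_rel_gradient f V x g" and "d \<in> V"
  shows "((\<lambda>s. (real_of_ereal (f (x + s *\<^sub>R d)) - real_of_ereal (f x)) / s) \<longlongrightarrow> g \<bullet> d)
           (at_right 0)"
proof -
  have "((\<lambda>h. real_of_ereal (f (x + h))) has_derivative (\<lambda>h. g \<bullet> h)) (at 0 within V)"
    using assms(2) by (simp add: has_rel_gradient_def)
  moreover have "(\<lambda>s::real. s *\<^sub>R d) ` {0<..} \<subseteq> V"
    using assms(1,3) by (auto intro: subspace_scale)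
  ultimately have "((\<lambda>h. real_of_ereal (f (x + h))) has_derivative (\<lambda>h. g \<bullet> h))
      (at ((\<lambda>s::real. s *\<^sub>R d) 0) within (\<lambda>s::real. s *\<^sub>R d) ` {0<..})"
    by (simp add: has_derivative_subset)
  moreover have "((\<lambda>s::real. s *\<^sub>R d) has_derivative (\<lambda>s. s *\<^sub>R d)) (at 0 within {0<..})"
    by (auto intro!: derivative_eq_intros)
  ultimately have "((\<lambda>s. real_of_ereal (f (x + s *\<^sub>R d))) has_derivative (\<lambda>s. s *\<^sub>R (g \<bullet> d)))
      (at 0 within {0<..})"
    using diff_chain_within by (fastforce simp: o_def)
  then have "((\<lambda>s. real_of_ereal (f (x + s *\<^sub>R d))) has_field_derivative g \<bullet> d) (at 0 within {0<..})"
    by (simp add: has_field_derivative_def mult.commute[of _ "g \<bullet> d"])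
  then show ?thesis by (simp add: has_field_derivative_iff)
qed

lemma has_rel_gradient_subgradient_ineq:
  assumes "econvex f" and no_minf: "\<And>x. f x \<noteq> -\<infinity>" and "subspace V"
    and g: "has_rel_gradient f V x g" and "f x \<noteq> \<infinity>" and "z - x \<in> V"
  shows "f x + ereal (g \<bullet> (z - x)) \<le> f z"
proof (cases "f z = \<infinity>")
  case False
  obtain a b where a: "f x = ereal a" and b: "f z = ereal b"
    using False \<open>f x \<noteq> \<infinity>\<close> no_minf by (meson ereal_cases)
  have "(real_of_ereal (f (x + s *\<^sub>R (z - x))) - real_of_ereal (f x)) / s \<le> b - a" if "0 < s" "s < 1" for s
  proof -
    have "x + s *\<^sub>R (z - x) = (1 - s) *\<^sub>R x + s *\<^sub>R z" by (simp add: algebra_simps)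
    then have "f (x + s *\<^sub>R (z - x)) \<le> ereal ((1 - s) * a + s * b)"
      using econvex_le_convex_combination[OF assms(1), of x a z b s] a b that by simp
    then have "real_of_ereal (f (x + s *\<^sub>R (z - x))) - a \<le> s * (b - a)"
      using no_minf[of "x + s *\<^sub>R (z - x)"]
      by (cases "f (x + s *\<^sub>R (z - x))") (auto simp: algebra_simps)
    then show ?thesis using that a by (simp add: pos_divide_le_eq mult.commute)
  qed
  then have "eventually (\<lambda>s. (real_of_ereal (f (x + s *\<^sub>R (z - x))) - real_of_ereal (f x)) / s
      \<le> b - a) (at_right 0)"
    unfolding eventually_at_right_field by (intro exI[of _ 1]) auto
  from tendsto_le[OF trivial_limit_at_right_real tendsto_const
      has_rel_gradient_directional_derivative[OF assms(3) g \<open>z - x \<in> V\<close>] this]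
  show ?thesis using a b by simp
qed simp

lemma eventually_add_scaleR_in_rel_interior:
  fixes S :: "'a::euclidean_space set"
  assumes y: "y \<in> rel_interior S" and d: "d \<in> direction (affine hull S)"
  shows "eventually (\<lambda>s. y + s *\<^sub>R d \<in> S) (at_right 0)"
proof -
  obtain \<epsilon> where "\<epsilon> > 0" and ball: "ball y \<epsilon> \<inter> affine hull S \<subseteq> S"
    using y unfolding mem_rel_interior_ball by blast
  have "0 < norm d + 1" by (simp add: add_nonneg_pos)
  have y_hull: "y \<in> affine hull S" using y rel_interior_subset by (blast intro: hull_inc)
  then have "subspace (direction (affine hull S))"
    using subspace_direction[OF affine_affine_hull] by blast
  then have sd: "s *\<^sub>R d \<in> direction (affine hull S)" for s using d by (rule subspace_scale)
  have "y + s *\<^sub>R d \<in> S" if s: "0 < s" "s < \<epsilon> / (norm d + 1)" for s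
  proof -
    have "s * norm d \<le> s * (norm d + 1)" using s by simp
    also have "\<dots> < \<epsilon>" using s \<open>0 < norm d + 1\<close> by (simp add: pos_less_divide_eq)
    finally have "y + s *\<^sub>R d \<in> ball y \<epsilon>" using s by (simp add: dist_norm)
    moreover have "y + s *\<^sub>R d \<in> affine hull S"
      using affine_add_direction[OF affine_affine_hull y_hull sd] .
    ultimately show ?thesis using ball by blast
  qed
  moreover have "\<epsilon> / (norm d + 1) > 0" using \<open>\<epsilon> > 0\<close> \<open>0 < norm d + 1\<close> by simp
  ultimately show ?thesis unfolding eventually_at_right_field by blast
qed

lemma rel_subgradient_inner_le_rel_gradient:
  fixes f :: "'a::euclidean_space \<Rightarrow> ereal"
  assumes no_minf: "\<And>x. f x \<noteq> -\<infinity>"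
    and H: "H = affine hull (edom f)" and y: "y \<in> rel_interior (edom f)"
    and a: "a \<in> rel_subdiff f H (direction H) y" and g: "has_rel_gradient f (direction H) y g"
    and d: "d \<in> direction H"
  shows "a \<bullet> d \<le> g \<bullet> d"
proof -
  have "y \<in> H" using a by (simp add: rel_subdiff_def)
  moreover have "affine H" unfolding H by (rule affine_affine_hull)
  ultimately have V: "subspace (direction H)" using subspace_direction by blast
  have fy: "f y \<noteq> \<infinity>" using a by (simp add: rel_subdiff_def)
  \<comment> \<open>real_of_ereal sends \<infinity> to 0: the quotients are meaningful only while y + s d stays in the domain\<close>
  have "eventually (\<lambda>s. a \<bullet> d \<le> (real_of_ereal (f (y + s *\<^sub>R d)) - real_of_ereal (f y)) / s)
      (at_right 0)"
    using eventually_add_scaleR_in_rel_interior[OF y d[unfolded H]] eventually_at_right_less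
  proof eventually_elim
    case (elim s)
    then have "f (y + s *\<^sub>R d) \<noteq> \<infinity>" by (simp add: edom_def)
    moreover have "y + s *\<^sub>R d \<in> H" using elim(1) unfolding H by (rule hull_inc)
    then have "f y + ereal (s * (a \<bullet> d)) \<le> f (y + s *\<^sub>R d)"
      using a by (auto simp: rel_subdiff_def)
    ultimately have "s * (a \<bullet> d) \<le> real_of_ereal (f (y + s *\<^sub>R d)) - real_of_ereal (f y)"
      using fy no_minf[of y] no_minf[of "y + s *\<^sub>R d"]
      by (cases "f y"; cases "f (y + s *\<^sub>R d)") auto
    then show ?case using elim(2) by (simp add: pos_le_divide_eq mult.commute)
  qed
  with has_rel_gradient_directional_derivative[OF V g d] show ?thesis
    by (rule tendsto_le[OF trivial_limit_at_right_real _ tendsto_const])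
qed

lemma rel_subdiff_eq_rel_gradient:
  fixes f :: "'a::euclidean_space \<Rightarrow> ereal"
  assumes "econvex f" and no_minf: "\<And>x. f x \<noteq> -\<infinity>"
    and H: "H = affine hull (edom f)" and y: "y \<in> rel_interior (edom f)"
    and g: "has_rel_gradient f (direction H) y g"
  shows "rel_subdiff f H (direction H) y = {g}"
proof -
  have y_dom: "y \<in> edom f" using y rel_interior_subset by blast
  then have y_H: "y \<in> H" unfolding H by (rule hull_inc)
  moreover have "affine H" unfolding H by (rule affine_affine_hull)
  ultimately have V: "subspace (direction H)" using subspace_direction by blast
  have fy: "f y \<noteq> \<infinity>" using y_dom by (simp add: edom_def)
  have g_V: "g \<in> direction H" using g by (simp add: has_rel_gradient_def)
  have "f y + ereal (g \<bullet> (z - y)) \<le> f z" if "z \<in> H" for z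
    using has_rel_gradient_subgradient_ineq[OF assms(1,2) V g fy] diff_mem_direction[OF that y_H] .
  then have g_sub: "g \<in> rel_subdiff f H (direction H) y"
    unfolding rel_subdiff_def using g_V y_H fy by blast
  have "a = g" if a: "a \<in> rel_subdiff f H (direction H) y" for a
  proof -
    have "a - g \<in> direction H" using a g_V V by (simp add: rel_subdiff_def subspace_diff)
    from rel_subgradient_inner_le_rel_gradient[OF no_minf H y a g this]
    have "(a - g) \<bullet> (a - g) \<le> 0" by (simp add: inner_diff_left)
    then have "a - g = 0" by (metis inner_gt_zero_iff not_le)
    then show "a = g" by simp
  qed
  with g_sub show ?thesis by blast
qed

section \<open>Conjugates of Legendre-type functions with compact domain\<close>

(* Danskin's theorem *)
lemma has_derivative_max_inner_continuous_argmax: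
  fixes Y :: "'a::real_inner \<Rightarrow> 'a" and \<phi> g :: "'a \<Rightarrow> real"
  assumes upper: "\<And>\<eta> z. z \<in> S \<Longrightarrow> \<eta> \<bullet> z - g z \<le> \<phi> \<eta>"
    and attained: "\<And>\<eta>. Y \<eta> \<in> S" "\<And>\<eta>. \<phi> \<eta> = \<eta> \<bullet> Y \<eta> - g (Y \<eta>)"
    and cont: "isCont Y \<theta>"
  shows "(\<phi> has_derivative (\<lambda>h. Y \<theta> \<bullet> h)) (at \<theta>)"
  unfolding has_derivative_iff_norm
proof (intro conjI bounded_linear_inner_right)
  define R where "R \<eta> = \<phi> \<eta> - \<phi> \<theta> - Y \<theta> \<bullet> (\<eta> - \<theta>)" for \<eta>
  have bound: "norm (norm (R \<eta>) / norm (\<eta> - \<theta>)) \<le> norm (Y \<eta> - Y \<theta>)" for \<eta>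
  proof -
    have "Y \<theta> \<bullet> (\<eta> - \<theta>) = \<eta> \<bullet> Y \<theta> - \<theta> \<bullet> Y \<theta>"
      by (simp add: inner_diff_right inner_commute)
    then have "0 \<le> R \<eta>"
      using upper[OF attained(1), of \<eta> \<theta>] attained(2)[of \<theta>] unfolding R_def by linarith
    moreover have "(\<eta> - \<theta>) \<bullet> (Y \<eta> - Y \<theta>) = \<eta> \<bullet> Y \<eta> - \<theta> \<bullet> Y \<eta> - Y \<theta> \<bullet> (\<eta> - \<theta>)"
      by (simp add: inner_diff_left inner_diff_right inner_commute)
    then have "R \<eta> \<le> (\<eta> - \<theta>) \<bullet> (Y \<eta> - Y \<theta>)"
      using upper[OF attained(1), of \<theta> \<eta>] attained(2)[of \<eta>] unfolding R_def by linarith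
    ultimately have "norm (R \<eta>) \<le> norm (\<eta> - \<theta>) * norm (Y \<eta> - Y \<theta>)"
      using norm_cauchy_schwarz[of "\<eta> - \<theta>" "Y \<eta> - Y \<theta>"] by simp
    then show ?thesis
      by (cases "\<eta> = \<theta>") (simp_all add: divide_le_eq mult.commute)
  qed
  have lim: "((\<lambda>\<eta>. norm (Y \<eta> - Y \<theta>)) \<longlongrightarrow> 0) (at \<theta>)"
    using cont by (simp add: isCont_def LIM_zero tendsto_norm_zero)
  show "((\<lambda>\<eta>. norm (\<phi> \<eta> - \<phi> \<theta> - Y \<theta> \<bullet> (\<eta> - \<theta>)) / norm (\<eta> - \<theta>)) \<longlongrightarrow> 0) (at \<theta>)"
    unfolding R_def[symmetric] by (rule Lim_null_comparison[OF always_eventually[OF allI[OF bound]] lim])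
qed

lemma norm_unbounded_imp_inner_unbounded:
  fixes g :: "nat \<Rightarrow> 'a::euclidean_space"
  assumes V: "subspace V" and g_V: "\<And>k. g k \<in> V"
    and g_unbounded: "filterlim (\<lambda>k. norm (g k)) at_top sequentially"
  obtains w where "w \<in> V" and "norm w = 1" and "\<not> bdd_above (range (\<lambda>k. g k \<bullet> w))"
proof -
  define u where "u k = sgn (g k)" for k
  have "u k \<in> cball 0 1" for k by (simp add: u_def norm_sgn)
  then obtain w r where r: "strict_mono r" and u_r: "(u \<circ> r) \<longlonglongrightarrow> w"
    using seq_compactE[OF compact_imp_seq_compact[OF compact_cball]] by metis
  have g_r: "filterlim (\<lambda>k. norm (g (r k))) at_top sequentially"
    using filterlim_compose[OF g_unbounded filterlim_subseq[OF r]] by (simp add: o_def)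
  then have g_r_large: "eventually (\<lambda>k. 1 \<le> norm (g (r k))) sequentially"
    by (simp add: filterlim_at_top)
  have "(\<lambda>k. norm (u (r k))) \<longlonglongrightarrow> norm w" using tendsto_norm[OF u_r] by (simp add: o_def)
  moreover have "eventually (\<lambda>k. norm (u (r k)) = 1) sequentially"
    using g_r_large by eventually_elim (auto simp: u_def norm_sgn)
  then have "(\<lambda>k. norm (u (r k))) \<longlonglongrightarrow> 1" by (rule tendsto_eventually)
  ultimately have norm_w: "norm w = 1" using LIMSEQ_unique by blast
  have w_V: "w \<in> V"
    using closed_sequential_limits[THEN iffD1, OF closed_subspace[OF V], rule_format, of "u \<circ> r" w] u_r
      g_V V by (auto simp: u_def sgn_div_norm intro: subspace_scale)
  have "\<not> bdd_above (range (\<lambda>k. g k \<bullet> w))"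
  proof
    assume "bdd_above (range (\<lambda>k. g k \<bullet> w))"
    then obtain K where K: "\<And>k. g k \<bullet> w \<le> K" by (auto simp: bdd_above_def)
    have "(\<lambda>k. u (r k) \<bullet> w) \<longlonglongrightarrow> w \<bullet> w"
      using tendsto_inner[OF u_r tendsto_const] by (simp add: o_def)
    moreover have "w \<bullet> w = 1" using norm_w by (simp add: power2_norm_eq_inner[symmetric])
    ultimately have lim_1: "(\<lambda>k. u (r k) \<bullet> w) \<longlonglongrightarrow> 1" by simp
    have lim_0: "(\<lambda>k. K / norm (g (r k))) \<longlonglongrightarrow> 0"
      by (rule tendsto_divide_0[OF tendsto_const filterlim_at_top_imp_at_infinity[OF g_r]])
    have "eventually (\<lambda>k. u (r k) \<bullet> w \<le> K / norm (g (r k))) sequentially"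
      using g_r_large
    proof eventually_elim
      case (elim k)
      then show ?case using K[of "r k"]
        by (simp add: u_def sgn_div_norm divide_right_mono divide_inverse_commute[symmetric])
    qed
    from tendsto_le[OF trivial_limit_sequentially lim_0 lim_1 this]
    have "1 \<le> (0::real)" .
    then show False by simp
  qed
  then show ?thesis by (rule that[OF w_V norm_w])
qed

locale legendre_regularizer =
  fixes C H V :: "'a::euclidean_space set" and \<Omega> :: "'a \<Rightarrow> ereal"
  assumes convex_C: "convex C" and compact_C: "compact C" and C_nonempty: "C \<noteq> {}"
    and H_eq: "H = affine hull C" and V_eq: "V = direction H"
    and proper: "proper_fun \<Omega>" and lsc: "elsc \<Omega>" and convex_\<Omega>: "econvex \<Omega>"
    and dom_\<Omega>: "edom \<Omega> = C" and legendre: "legendre_on \<Omega> H V"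
begin

lemma no_minf: "\<Omega> x \<noteq> -\<infinity>"
  using proper by (simp add: proper_fun_def)

lemma \<Omega>_finite:
  assumes "y \<in> C"
  obtains a where "\<Omega> y = ereal a"
  using assms dom_\<Omega> no_minf[of y] by (cases "\<Omega> y") (auto simp: edom_def)

lemma \<Omega>_outside: "y \<notin> C \<Longrightarrow> \<Omega> y = \<infinity>"
  using dom_\<Omega> by (auto simp: edom_def)

lemma C_subset_H: "C \<subseteq> H"
  by (simp add: H_eq hull_subset)

lemma affine_H: "affine H"
  by (simp add: H_eq)

lemma subspace_V: "subspace V"
  using subspace_direction[OF affine_H] C_subset_H C_nonempty V_eq by blast

lemma diff_mem_V: "x \<in> C \<Longrightarrow> y \<in> C \<Longrightarrow> x - y \<in> V"
  using diff_mem_direction C_subset_H V_eq by blast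

lemma legendre_unfolded:
  "(\<forall>x\<in>rel_interior C. \<forall>y\<in>rel_interior C. \<forall>t::real. x \<noteq> y \<and> 0 < t \<and> t < 1 \<longrightarrow>
      \<Omega> ((1 - t) *\<^sub>R x + t *\<^sub>R y) < ereal (1 - t) * \<Omega> x + ereal t * \<Omega> y) \<and>
   rel_interior C \<noteq> {} \<and>
   (\<forall>y\<in>rel_interior C. \<exists>g. has_rel_gradient \<Omega> V y g) \<and>
   (\<forall>s x g. (\<forall>k. s k \<in> rel_interior C) \<longrightarrow> s \<longlonglongrightarrow> x \<longrightarrow> x \<in> (top_of_set H) frontier_of C \<longrightarrow>
      (\<forall>k. has_rel_gradient \<Omega> V (s k) (g k)) \<longrightarrow>
      filterlim (\<lambda>k. norm (g k)) at_top sequentially)"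
proof -
  have "{y \<in> H. \<Omega> y < \<infinity>} = C"
    using dom_\<Omega> C_subset_H by (auto simp: edom_def)
  moreover have "(top_of_set H) interior_of C = rel_interior C"
    by (simp add: rel_interior_def interior_of_def H_eq)
  ultimately show ?thesis using legendre by (simp add: legendre_on_def Let_def)
qed

lemma strictly_convex_rel_interior:
  assumes "x \<in> rel_interior C" and "y \<in> rel_interior C" and "x \<noteq> y" and "0 < t" and "t < 1"
  shows "\<Omega> ((1 - t) *\<^sub>R x + t *\<^sub>R y) < ereal (1 - t) * \<Omega> x + ereal t * \<Omega> y"
  using legendre_unfolded assms by blast

lemma rel_interior_nonempty: "rel_interior C \<noteq> {}"
  using legendre_unfolded by blast

lemma rel_gradient_exists: "y \<in> rel_interior C \<Longrightarrow> \<exists>g. has_rel_gradient \<Omega> V y g"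
  using legendre_unfolded by blast

lemma rel_gradient_blowup:
  assumes "\<And>k. s k \<in> rel_interior C" and "s \<longlonglongrightarrow> x" and "x \<in> C" and "x \<notin> rel_interior C"
    and "\<And>k. has_rel_gradient \<Omega> V (s k) (g k)"
  shows "filterlim (\<lambda>k. norm (g k)) at_top sequentially"
proof -
  have "x \<in> (top_of_set H) frontier_of C"
    using assms(3,4) closure_of_subset[of C "top_of_set H"] C_subset_H
    unfolding frontier_of_def rel_interior_def interior_of_def H_eq by auto
  then show ?thesis using legendre_unfolded assms(1,2,5) by blast
qed

definition objective :: "'a \<Rightarrow> 'a \<Rightarrow> real" where
  "objective \<theta> y = \<theta> \<bullet> y - real_of_ereal (\<Omega> y)"

definition is_maximizer :: "'a \<Rightarrow> 'a \<Rightarrow> bool" where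
  "is_maximizer \<theta> y \<longleftrightarrow> y \<in> C \<and> (\<forall>z\<in>C. objective \<theta> z \<le> objective \<theta> y)"

lemma objective_attains_max:
  assumes "compact K" and "K \<noteq> {}" and "K \<subseteq> C"
  obtains y where "y \<in> K" and "\<And>z. z \<in> K \<Longrightarrow> objective \<theta> z \<le> objective \<theta> y"
proof -
  obtain y where y: "y \<in> K"
    and min: "\<And>z. z \<in> K \<Longrightarrow> \<Omega> y + ereal (- \<theta> \<bullet> y) \<le> \<Omega> z + ereal (- \<theta> \<bullet> z)"
    using elsc_add_inner_attains_min[OF lsc no_minf assms(1,2)] by blast
  have "objective \<theta> z \<le> objective \<theta> y" if z: "z \<in> K" for z
  proof -
    obtain a where "\<Omega> y = ereal a" using y assms(3) \<Omega>_finite by blast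
    moreover obtain b where "\<Omega> z = ereal b" using z assms(3) \<Omega>_finite by blast
    ultimately show ?thesis using min[OF z] by (simp add: objective_def)
  qed
  with y that show ?thesis by blast
qed

lemma fconj_eq_objective:
  assumes "is_maximizer \<theta> y"
  shows "fconj \<Omega> \<theta> = ereal (objective \<theta> y)"
  unfolding fconj_def
proof (rule antisym)
  show "(SUP z. ereal (\<theta> \<bullet> z) - \<Omega> z) \<le> ereal (objective \<theta> y)"
  proof (rule SUP_least)
    fix z
    show "ereal (\<theta> \<bullet> z) - \<Omega> z \<le> ereal (objective \<theta> y)"
    proof (cases "z \<in> C")
      case True
      then obtain a where "\<Omega> z = ereal a" by (rule \<Omega>_finite)
      then show ?thesis
        using assms True by (auto simp: is_maximizer_def objective_def)
    qed (simp add: \<Omega>_outside)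
  qed
  obtain a where "\<Omega> y = ereal a"
    using assms \<Omega>_finite by (auto simp: is_maximizer_def)
  then show "ereal (objective \<theta> y) \<le> (SUP z. ereal (\<theta> \<bullet> z) - \<Omega> z)"
    by (intro SUP_upper2[of y]) (auto simp: objective_def)
qed

lemma subdiff_imp_is_maximizer:
  assumes "y \<in> C" and "\<theta> \<in> subdiff \<Omega> y"
  shows "is_maximizer \<theta> y"
  unfolding is_maximizer_def
proof (intro conjI ballI assms(1))
  fix z assume "z \<in> C"
  have "\<Omega> y + ereal (\<theta> \<bullet> (z - y)) \<le> \<Omega> z" using assms(2) by (simp add: subdiff_def)
  moreover obtain a where "\<Omega> y = ereal a" using assms(1) by (rule \<Omega>_finite)
  moreover obtain b where "\<Omega> z = ereal b" using \<open>z \<in> C\<close> by (rule \<Omega>_finite)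
  ultimately have "real_of_ereal (\<Omega> y) + \<theta> \<bullet> (z - y) \<le> real_of_ereal (\<Omega> z)" by simp
  then show "objective \<theta> z \<le> objective \<theta> y" by (simp add: objective_def inner_diff_right)
qed

lemma rel_gradient_bound_near_maximizer:
  assumes max: "is_maximizer \<theta> y" and y1: "y1 \<in> C" and t: "0 < t" "t \<le> 1"
    and g: "has_rel_gradient \<Omega> V (y + t *\<^sub>R (y1 - y)) g" and z: "z \<in> C"
  shows "(g - \<theta>) \<bullet> (z - y1) \<le> objective \<theta> y - objective \<theta> z"
proof -
  define s where "s = y + t *\<^sub>R (y1 - y)"
  have y: "y \<in> C" using max by (simp add: is_maximizer_def)
  have "s = (1 - t) *\<^sub>R y + t *\<^sub>R y1" by (simp add: s_def algebra_simps)
  then have s: "s \<in> C" using convexD[OF convex_C y y1, of "1 - t" t] t by simp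
  have sub: "real_of_ereal (\<Omega> s) + g \<bullet> (x - s) \<le> real_of_ereal (\<Omega> x)" if x: "x \<in> C" for x
  proof -
    obtain a where a: "\<Omega> s = ereal a" using s by (rule \<Omega>_finite)
    obtain b where b: "\<Omega> x = ereal b" using x by (rule \<Omega>_finite)
    have "\<Omega> s + ereal (g \<bullet> (x - s)) \<le> \<Omega> x"
      using has_rel_gradient_subgradient_ineq[OF convex_\<Omega> no_minf subspace_V g[folded s_def]]
        diff_mem_V[OF x s] a by simp
    then show ?thesis using a b by simp
  qed
  define c where "c = \<theta> \<bullet> (y1 - y)"
  define G where "G = g \<bullet> (y1 - y)"
  have "objective \<theta> s \<le> objective \<theta> y" using max s by (simp add: is_maximizer_def)
  moreover have "\<theta> \<bullet> s = \<theta> \<bullet> y + t * c" by (simp add: s_def c_def inner_add_right)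
  ultimately have s_above: "real_of_ereal (\<Omega> y) + t * c \<le> real_of_ereal (\<Omega> s)"
    by (simp add: objective_def)
  have "g \<bullet> (y - s) = - (t * G)" by (simp add: s_def G_def)
  then have "t * c \<le> t * G" using sub[OF y] s_above by linarith
  then have "c \<le> G" using t(1) by simp
  then have "(1 - t) * c \<le> (1 - t) * G" using t(2) by (simp add: mult_left_mono)
  moreover have "g \<bullet> (z - s) = g \<bullet> (z - y1) + (1 - t) * G"
    by (simp add: s_def G_def algebra_simps inner_diff_right)
  moreover have "\<theta> \<bullet> (z - y1) = \<theta> \<bullet> z - \<theta> \<bullet> y - c"
    by (simp add: c_def inner_diff_right)
  ultimately show ?thesis
    using sub[OF z] s_above by (simp add: objective_def inner_diff_left algebra_simps)
qed

lemma maximizer_in_rel_interior: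
  assumes max: "is_maximizer \<theta> y"
  shows "y \<in> rel_interior C"
proof (rule ccontr)
  assume boundary: "y \<notin> rel_interior C"
  have y: "y \<in> C" using max by (simp add: is_maximizer_def)
  obtain y1 where y1: "y1 \<in> rel_interior C" using rel_interior_nonempty by blast
  then have y1_C: "y1 \<in> C" using rel_interior_subset by blast
  define t where "t k = inverse (real (Suc k))" for k
  have t: "0 < t k" "t k \<le> 1" for k by (simp_all add: t_def inverse_le_1_iff)
  define s where "s k = y + t k *\<^sub>R (y1 - y)" for k
  have s: "s k \<in> rel_interior C" for k
  proof -
    have "y - t k *\<^sub>R (y - y1) \<in> rel_interior C"
      using rel_interior_closure_convex_shrink[OF convex_C y1 _ t] y closure_subset by blast
    then show ?thesis by (simp add: s_def algebra_simps)
  qed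
  have "t \<longlonglongrightarrow> 0" unfolding t_def by (rule LIMSEQ_inverse_real_of_nat)
  from tendsto_add[OF tendsto_const[of y] tendsto_scaleR[OF this tendsto_const[of "y1 - y"]]]
  have "s \<longlonglongrightarrow> y" by (simp add: s_def[abs_def])
  obtain g where g: "\<And>k. has_rel_gradient \<Omega> V (s k) (g k)"
    using rel_gradient_exists[OF s] by metis
  have "filterlim (\<lambda>k. norm (g k)) at_top sequentially"
    using rel_gradient_blowup[OF s \<open>s \<longlonglongrightarrow> y\<close> y boundary g] .
  then obtain w where w: "w \<in> V" "norm w = 1" and unbounded: "\<not> bdd_above (range (\<lambda>k. g k \<bullet> w))"
    using norm_unbounded_imp_inner_unbounded[OF subspace_V] g by (auto simp: has_rel_gradient_def)
  obtain \<epsilon> where "\<epsilon> > 0" and ball: "ball y1 \<epsilon> \<inter> H \<subseteq> C"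
    using y1 unfolding mem_rel_interior_ball H_eq by blast
  define z where "z = y1 + (\<epsilon> / 2) *\<^sub>R w"
  have "z \<in> H"
    using affine_add_direction[OF affine_H] y1_C C_subset_H subspace_scale[OF subspace_V w(1)]
    by (auto simp: z_def V_eq)
  moreover have "dist y1 z < \<epsilon>" using \<open>\<epsilon> > 0\<close> w(2) by (simp add: z_def dist_norm)
  ultimately have z: "z \<in> C" using ball by auto
  have "g k \<bullet> w \<le> (objective \<theta> y - objective \<theta> z + \<theta> \<bullet> (z - y1)) / (\<epsilon> / 2)" for k
  proof -
    have "(g k - \<theta>) \<bullet> (z - y1) \<le> objective \<theta> y - objective \<theta> z"
      using rel_gradient_bound_near_maximizer[OF max y1_C t g[unfolded s_def] z] .
    then have "\<epsilon> / 2 * (g k \<bullet> w) \<le> objective \<theta> y - objective \<theta> z + \<theta> \<bullet> (z - y1)"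
      by (simp add: z_def inner_diff_left right_diff_distrib)
    then show ?thesis using \<open>\<epsilon> > 0\<close> by (simp add: pos_le_divide_eq mult.commute)
  qed
  then have "bdd_above (range (\<lambda>k. g k \<bullet> w))" by (intro bdd_aboveI2)
  with unbounded show False by contradiction
qed

lemma maximizer_unique:
  assumes "is_maximizer \<theta> y" and "is_maximizer \<theta> y'"
  shows "y = y'"
proof (rule ccontr)
  assume "y \<noteq> y'"
  have y: "y \<in> C" "y' \<in> C" using assms by (auto simp: is_maximizer_def)
  define m where "m = (1 - 1 / 2) *\<^sub>R y + (1 / 2 :: real) *\<^sub>R y'"
  have m: "m \<in> C" unfolding m_def using convexD[OF convex_C y, of "1 - 1 / 2" "1 / 2"] by simp
  obtain a where a: "\<Omega> y = ereal a" using y(1) by (rule \<Omega>_finite)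
  obtain a' where a': "\<Omega> y' = ereal a'" using y(2) by (rule \<Omega>_finite)
  obtain b where b: "\<Omega> m = ereal b" using m by (rule \<Omega>_finite)
  have "\<Omega> m < ereal (1 - 1 / 2) * \<Omega> y + ereal (1 / 2) * \<Omega> y'"
    unfolding m_def using maximizer_in_rel_interior[OF assms(1)] maximizer_in_rel_interior[OF assms(2)]
    by (rule strictly_convex_rel_interior) (use \<open>y \<noteq> y'\<close> in auto)
  then have "b < a / 2 + a' / 2" using a a' b by simp
  moreover have "objective \<theta> y = objective \<theta> y'"
    using assms y by (auto simp: is_maximizer_def intro: antisym)
  moreover have "\<theta> \<bullet> m = \<theta> \<bullet> y / 2 + \<theta> \<bullet> y' / 2" by (simp add: m_def inner_add_right)
  ultimately have "objective \<theta> y < objective \<theta> m" using a a' b by (simp add: objective_def)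
  moreover have "objective \<theta> m \<le> objective \<theta> y" using assms(1) m by (simp add: is_maximizer_def)
  ultimately show False by simp
qed

definition maximizer :: "'a \<Rightarrow> 'a" where
  "maximizer \<theta> = (THE y. is_maximizer \<theta> y)"

lemma is_maximizer_maximizer: "is_maximizer \<theta> (maximizer \<theta>)"
proof -
  obtain y where y: "is_maximizer \<theta> y"
    using objective_attains_max[OF compact_C C_nonempty order_refl]
    unfolding is_maximizer_def by metis
  then show ?thesis
    unfolding maximizer_def by (rule theI) (rule maximizer_unique[OF _ y])
qed

lemma maximizer_eqI: "is_maximizer \<theta> y \<Longrightarrow> maximizer \<theta> = y"
  using is_maximizer_maximizer maximizer_unique by blast

lemma maximizer_in_C: "maximizer \<theta> \<in> C"
  using is_maximizer_maximizer by (simp add: is_maximizer_def)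

lemma objective_gap_off_ball:
  assumes "\<epsilon> > 0"
  obtains \<gamma> where "\<gamma> > 0"
    and "\<And>z. z \<in> C \<Longrightarrow> \<epsilon> \<le> dist z (maximizer \<theta>) \<Longrightarrow>
           objective \<theta> z + \<gamma> \<le> objective \<theta> (maximizer \<theta>)"
proof (cases "C - ball (maximizer \<theta>) \<epsilon> = {}")
  case True
  have "\<not> \<epsilon> \<le> dist z (maximizer \<theta>)" if z: "z \<in> C" for z
    using True z by (auto simp: dist_commute)
  then show ?thesis using that[of 1] by auto
next
  case False
  have "compact (C - ball (maximizer \<theta>) \<epsilon>)" by (intro compact_diff compact_C open_ball)
  then obtain y' where y': "y' \<in> C - ball (maximizer \<theta>) \<epsilon>"
    and max': "\<And>z. z \<in> C - ball (maximizer \<theta>) \<epsilon> \<Longrightarrow> objective \<theta> z \<le> objective \<theta> y'"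
    using objective_attains_max[OF _ False] by blast
  define \<gamma> where "\<gamma> = objective \<theta> (maximizer \<theta>) - objective \<theta> y'"
  have "\<gamma> > 0"
  proof (rule ccontr)
    assume "\<not> \<gamma> > 0"
    have "objective \<theta> z \<le> objective \<theta> y'" if z: "z \<in> C" for z
    proof -
      have "objective \<theta> z \<le> objective \<theta> (maximizer \<theta>)"
        using is_maximizer_maximizer[of \<theta>] z by (simp add: is_maximizer_def)
      then show ?thesis using \<open>\<not> \<gamma> > 0\<close> by (simp add: \<gamma>_def)
    qed
    then have "is_maximizer \<theta> y'" using y' by (simp add: is_maximizer_def)
    then have "y' = maximizer \<theta>" using maximizer_eqI by simp
    then show False using y' \<open>\<epsilon> > 0\<close> by simp
  qed
  moreover have "objective \<theta> z + \<gamma> \<le> objective \<theta> (maximizer \<theta>)"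
    if "z \<in> C" "\<epsilon> \<le> dist z (maximizer \<theta>)" for z
    using max'[of z] that by (simp add: \<gamma>_def dist_commute)
  ultimately show ?thesis using that by blast
qed

lemma isCont_maximizer: "isCont maximizer \<theta>0"
  unfolding continuous_at_eps_delta
proof (intro allI impI)
  fix \<epsilon> :: real assume "\<epsilon> > 0"
  then obtain \<gamma> where "\<gamma> > 0" and gap: "\<And>z. z \<in> C \<Longrightarrow> \<epsilon> \<le> dist z (maximizer \<theta>0) \<Longrightarrow>
      objective \<theta>0 z + \<gamma> \<le> objective \<theta>0 (maximizer \<theta>0)"
    using objective_gap_off_ball[where \<theta> = \<theta>0] by blast
  obtain R where "R > 0" and R: "\<And>y. y \<in> C \<Longrightarrow> norm y \<le> R"
    using compact_imp_bounded[OF compact_C] bounded_pos by blast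
  have close: "\<bar>objective \<theta> z - objective \<theta>0 z\<bar> \<le> dist \<theta> \<theta>0 * R" if "z \<in> C" for \<theta> z
  proof -
    have "\<bar>objective \<theta> z - objective \<theta>0 z\<bar> = \<bar>(\<theta> - \<theta>0) \<bullet> z\<bar>"
      by (simp add: objective_def inner_diff_left)
    also have "\<dots> \<le> norm (\<theta> - \<theta>0) * norm z" by (rule Cauchy_Schwarz_ineq2)
    also have "\<dots> \<le> dist \<theta> \<theta>0 * R" using R[OF that] by (simp add: dist_norm mult_left_mono)
    finally show ?thesis .
  qed
  show "\<exists>\<delta>>0. \<forall>\<theta>. dist \<theta> \<theta>0 < \<delta> \<longrightarrow> dist (maximizer \<theta>) (maximizer \<theta>0) < \<epsilon>"
  proof (intro exI[of _ "\<gamma> / (2 * R)"] conjI allI impI)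
    show "\<gamma> / (2 * R) > 0" using \<open>\<gamma> > 0\<close> \<open>R > 0\<close> by simp
    fix \<theta> assume "dist \<theta> \<theta>0 < \<gamma> / (2 * R)"
    then have "dist \<theta> \<theta>0 * R < \<gamma> / 2" using \<open>R > 0\<close> by (simp add: pos_less_divide_eq field_simps)
    show "dist (maximizer \<theta>) (maximizer \<theta>0) < \<epsilon>"
    proof (rule ccontr)
      assume "\<not> ?thesis"
      then have "objective \<theta>0 (maximizer \<theta>) + \<gamma> \<le> objective \<theta>0 (maximizer \<theta>0)"
        using gap maximizer_in_C by simp
      moreover have "objective \<theta> (maximizer \<theta>0) \<le> objective \<theta> (maximizer \<theta>)"
        using is_maximizer_maximizer[of \<theta>] maximizer_in_C by (simp add: is_maximizer_def)
      ultimately show False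
        using close[of "maximizer \<theta>" \<theta>, OF maximizer_in_C]
          close[of "maximizer \<theta>0" \<theta>, OF maximizer_in_C]
          \<open>dist \<theta> \<theta>0 * R < \<gamma> / 2\<close> by linarith
    qed
  qed
qed

lemma fconj_has_derivative:
  "((\<lambda>\<eta>. real_of_ereal (fconj \<Omega> \<eta>)) has_derivative (\<lambda>h. maximizer \<theta> \<bullet> h)) (at \<theta>)"
proof (rule has_derivative_max_inner_continuous_argmax)
  have fconj: "real_of_ereal (fconj \<Omega> \<eta>) = objective \<eta> (maximizer \<eta>)" for \<eta>
    using fconj_eq_objective[OF is_maximizer_maximizer] by simp
  show "\<eta> \<bullet> z - real_of_ereal (\<Omega> z) \<le> real_of_ereal (fconj \<Omega> \<eta>)" if "z \<in> C" for \<eta> z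
    using is_maximizer_maximizer[of \<eta>] that by (simp add: fconj is_maximizer_def objective_def)
  show "real_of_ereal (fconj \<Omega> \<eta>) = \<eta> \<bullet> maximizer \<eta> - real_of_ereal (\<Omega> (maximizer \<eta>))" for \<eta>
    by (simp add: fconj objective_def)
qed (rule maximizer_in_C, rule isCont_maximizer)


lemma fconj_less_infinity: "fconj \<Omega> \<theta> < \<infinity>"
  using fconj_eq_objective[OF is_maximizer_maximizer] by simp

lemma fconj_has_derivative_at_subgradient:
  assumes "y \<in> rel_interior C" and "\<theta> \<in> subdiff \<Omega> y"
  shows "((\<lambda>\<eta>. real_of_ereal (fconj \<Omega> \<eta>)) has_derivative (\<lambda>h. y \<bullet> h)) (at \<theta>)"
  using fconj_has_derivative[of \<theta>] maximizer_eqI[OF subdiff_imp_is_maximizer] assms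
    rel_interior_subset by blast

lemma edom_subset_H: "edom \<Omega> \<subseteq> H"
  using C_subset_H dom_\<Omega> by simp

lemma fconj_eq_fconj_orth_proj:
  assumes "y0 \<in> C"
  shows "fconj \<Omega> \<theta> = fconj \<Omega> (orth_proj V \<theta>) + ereal ((\<theta> - orth_proj V \<theta>) \<bullet> y0)"
  using fconj_orth_proj[OF affine_H edom_subset_H] assms C_subset_H by (auto simp: V_eq)

lemma subdiff_eq_rel_subdiff_plus_V_perp:
  assumes "y \<in> H"
  shows "subdiff \<Omega> y = {a + b | a b. a \<in> rel_subdiff \<Omega> H V y \<and> b \<in> orthogonal_comp V}"
  using subdiff_eq_rel_subdiff_plus_orthogonal_comp[OF affine_H edom_subset_H assms] by (simp add: V_eq)

lemma subdiff_eq_rel_gradient_plus_V_perp: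
  assumes y: "y \<in> rel_interior (edom \<Omega>)" and g: "has_rel_gradient \<Omega> V y g"
  shows "subdiff \<Omega> y = {g + b | b. b \<in> orthogonal_comp V}"
proof -
  have "rel_subdiff \<Omega> H V y = {g}"
    using rel_subdiff_eq_rel_gradient[OF convex_\<Omega> no_minf _ y] g by (simp add: V_eq H_eq dom_\<Omega>)
  moreover have "y \<in> H" using y rel_interior_subset edom_subset_H by blast
  ultimately show ?thesis using subdiff_eq_rel_subdiff_plus_V_perp by simp
qed

end

theorem proposition4:
  fixes C H V :: "'a::euclidean_space set" and \<Omega> :: "'a \<Rightarrow> ereal"
  assumes "convex C" and "compact C" and "C \<noteq> {}"
    and H: "H = affine hull C" and V: "V = direction H"
    and "proper_fun \<Omega>" and "elsc \<Omega>" and "econvex \<Omega>" and "edom \<Omega> = C"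
    and "legendre_on \<Omega> H V"
  shows
    "((\<forall>\<theta>. fconj \<Omega> \<theta> < \<infinity>) \<and>
     (\<forall>\<theta>. (\<lambda>\<eta>. real_of_ereal (fconj \<Omega> \<eta>)) differentiable (at \<theta>)) \<and>
     (\<forall>y\<in>rel_interior C. \<forall>\<theta>\<in>subdiff \<Omega> y.
        ((\<lambda>\<eta>. real_of_ereal (fconj \<Omega> \<eta>)) has_derivative (\<lambda>h. y \<bullet> h)) (at \<theta>))) \<and>
    (\<forall>\<theta> y0. y0 \<in> C \<longrightarrow>
       fconj \<Omega> \<theta> = fconj \<Omega> (orth_proj V \<theta>) + ereal ((\<theta> - orth_proj V \<theta>) \<bullet> y0)) \<and>
    (\<forall>y\<in>H. subdiff \<Omega> y = {a + b | a b. a \<in> rel_subdiff \<Omega> H V y \<and> b \<in> orthogonal_comp V}) \<and>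
    (\<forall>y\<in>rel_interior (edom \<Omega>). \<forall>g. has_rel_gradient \<Omega> V y g \<longrightarrow>
       subdiff \<Omega> y = {g + b | b. b \<in> orthogonal_comp V})"
proof -
  interpret legendre_regularizer C H V \<Omega>
    by unfold_locales (fact assms)+
  show ?thesis
    by (intro conjI allI ballI impI fconj_less_infinity differentiableI[OF fconj_has_derivative]
        fconj_has_derivative_at_subgradient fconj_eq_fconj_orth_proj subdiff_eq_rel_subdiff_plus_V_perp
        subdiff_eq_rel_gradient_plus_V_perp)
qed

end
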